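(* Let $\alpha,\beta,\mu\in\mathbb{R}\setminus\{0\}$ with $\Delta:=\alpha^2+\beta^2-2\mu^2>0$, let $x_1,x_2\in\mathbb{R}$, and let $B_\mu=B_{\alpha,\beta,\mu}(t,x;x_1,x_2)$ be the Gardner breather. Then for every fixed $t\in\mathbb{R}$, $B_\mu$ satisfies, as a function of $x$, the nonlinear stationary equation $$B_{\mu,4x}-2(\beta^2-\alpha^2)\big(B_{\mu,xx}+3\mu B_\mu^2+B_\mu^3\big)+(\alpha^2+\beta^2)^2B_\mu+5B_\mu B_{\mu,x}^2+5B_\mu^2B_{\mu,xx}+\tfrac32 B_\mu^5+5\mu B_{\mu,x}^2+10\mu B_\mu B_{\mu,xx}+10\mu^2B_\mu^3+\tfrac{15}{2}\mu B_\mu^4=0,$$ where subscripts $x$, $xx$, $4x$ denote spatial derivatives.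
   Context: Gardner breathers: for $\alpha,\beta,\mu\in\mathbb{R}\setminus\{0\}$ with $\Delta>0$ and $x_1,x_2\in\mathbb{R}$, set $\delta:=\alpha^2-3\beta^2$, $\gamma:=3\alpha^2-\beta^2$, $y_1:=x+\delta t+x_1$, $y_2:=x+\gamma t+x_2$, $$G_\mu(t,x):=\frac{\beta\sqrt{\alpha^2+\beta^2}}{\alpha\sqrt{\Delta}}\sin(\alpha y_1)-\frac{\sqrt2\,\mu\beta\, e^{\beta y_2}}{\Delta},\qquad F_\mu(t,x):=\cosh(\beta y_2)-\frac{\sqrt2\,\mu\beta\,[\alpha\cos(\alpha y_1)-\beta\sin(\alpha y_1)]}{\alpha\sqrt{\alpha^2+\beta^2}\sqrt{\Delta}},$$ and $B_{\alpha,\beta,\mu}(t,x;x_1,x_2):=2\sqrt2\,\partial_x[\arctan(G_\mu/F_\mu)]=2\sqrt2\,\frac{F_\mu\partial_xG_\mu-G_\mu\partial_xF_\mu}{F_\mu^2+G_\mu^2}$. It is a real smooth solution of the Gardner equation $w_t+(w_{xx}+3\mu w^2+w^3)_x=0$. *)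

theory Defs
  imports "HOL-Analysis.Analysis"
begin

definition gardner_Delta :: "real \<Rightarrow> real \<Rightarrow> real \<Rightarrow> real" where
  "gardner_Delta \<alpha> \<beta> \<mu> = \<alpha>^2 + \<beta>^2 - 2 * \<mu>^2"

definition gardner_G :: "real \<Rightarrow> real \<Rightarrow> real \<Rightarrow> real \<Rightarrow> real \<Rightarrow> real \<Rightarrow> real \<Rightarrow> real" where
  "gardner_G \<alpha> \<beta> \<mu> x1 x2 t x =
     (let \<Delta> = gardner_Delta \<alpha> \<beta> \<mu>;
          y1 = x + (\<alpha>^2 - 3*\<beta>^2) * t + x1;
          y2 = x + (3*\<alpha>^2 - \<beta>^2) * t + x2
      in \<beta> * sqrt (\<alpha>^2 + \<beta>^2) / (\<alpha> * sqrt \<Delta>) * sin (\<alpha> * y1)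
         - sqrt 2 * \<mu> * \<beta> * exp (\<beta> * y2) / \<Delta>)"

definition gardner_F :: "real \<Rightarrow> real \<Rightarrow> real \<Rightarrow> real \<Rightarrow> real \<Rightarrow> real \<Rightarrow> real \<Rightarrow> real" where
  "gardner_F \<alpha> \<beta> \<mu> x1 x2 t x =
     (let \<Delta> = gardner_Delta \<alpha> \<beta> \<mu>;
          y1 = x + (\<alpha>^2 - 3*\<beta>^2) * t + x1;
          y2 = x + (3*\<alpha>^2 - \<beta>^2) * t + x2
      in cosh (\<beta> * y2)
         - sqrt 2 * \<mu> * \<beta> * (\<alpha> * cos (\<alpha> * y1) - \<beta> * sin (\<alpha> * y1))
           / (\<alpha> * sqrt (\<alpha>^2 + \<beta>^2) * sqrt \<Delta>))"

definition gardner_breather :: "real \<Rightarrow> real \<Rightarrow> real \<Rightarrow> real \<Rightarrow> real \<Rightarrow> real \<Rightarrow> real \<Rightarrow> real" where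
  "gardner_breather \<alpha> \<beta> \<mu> x1 x2 t x =
     (let F = gardner_F \<alpha> \<beta> \<mu> x1 x2 t; G = gardner_G \<alpha> \<beta> \<mu> x1 x2 t
      in 2 * sqrt 2 * (F x * deriv G x - G x * deriv F x) / ((F x)^2 + (G x)^2))"

end

theory Submission
  imports Defs
begin

(*
  Write the breather as B = 2 sqrt 2 Im (H'/H) with H = F + i G.  Both F and G are linear
  combinations of cos theta, sin theta, e^zeta and e^-zeta (theta = alpha y1, zeta = beta y2), so
  H'''' = (beta^2 - alpha^2) H'' + alpha^2 beta^2 H, and every derivative of Im (H'/H) = Im (log H)'
  is the imaginary part of a polynomial in w_k = H^(k)/H, k = 1, 2, 3.  The particular coefficients
  of F and G make the w_k satisfy four real relations: two Wronskian-type identities, and two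
  coming from the operators (D +- beta)(D^2 + alpha^2) and (D +- i alpha)(D^2 - beta^2), each of
  which annihilates all but one exponential occurring in H.  The stationary equation divided by
  2 sqrt 2, multiplied by alpha beta (alpha^2 + beta^2), is an explicit combination of these relations.
*)

lemma has_vector_derivative_quotient:
  fixes f g :: "real \<Rightarrow> 'a::real_normed_field"
  assumes "(f has_vector_derivative f') (at x within S)" and "(g has_vector_derivative g') (at x within S)"
    and "g x \<noteq> 0"
  shows "((\<lambda>x. f x / g x) has_vector_derivative (f' - f x / g x * g') / g x) (at x within S)"
  using has_derivative_divide'[OF assms[unfolded has_vector_derivative_def]]
  unfolding has_vector_derivative_def
  by (rule has_derivative_eq_rhs) (use assms(3) in \<open>auto simp: fun_eq_iff scaleR_conv_of_real field_simps\<close>)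

lemma has_vector_derivative_power[derivative_intros]:
  fixes f :: "real \<Rightarrow> 'a::real_normed_field"
  assumes "(f has_vector_derivative f') (at x within S)"
  shows "((\<lambda>x. f x ^ n) has_vector_derivative of_nat n * f' * f x ^ (n - 1)) (at x within S)"
  using has_derivative_power[OF assms[unfolded has_vector_derivative_def]]
  unfolding has_vector_derivative_def
  by (rule has_derivative_eq_rhs) (simp add: fun_eq_iff scaleR_conv_of_real ac_simps)

lemma divide_mult_cnj_divide:
  fixes a b h :: complex
  shows "a / h * cnj (b / h) = a * cnj b / of_real ((cmod h)\<^sup>2)"
  unfolding complex_norm_square by simp

lemma Re_divide_cnj: "Re (a / h) = Re (a * cnj h) / (cmod h)^2"
  by (simp add: Re_divide')

lemma Im_divide_cnj: "Im (a / h) = Im (a * cnj h) / (cmod h)^2"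
  by (simp add: Im_divide')

(* If w_k = H^(k)/H and H'''' = p H'' + q H, then log_derivk is the k-th derivative of log H. *)
definition log_deriv2 :: "complex \<Rightarrow> complex \<Rightarrow> complex" where
  "log_deriv2 w1 w2 = w2 - w1^2"

definition log_deriv3 :: "complex \<Rightarrow> complex \<Rightarrow> complex \<Rightarrow> complex" where
  "log_deriv3 w1 w2 w3 = w3 - 3*w1*w2 + 2*w1^3"

definition log_deriv4 :: "complex \<Rightarrow> complex \<Rightarrow> complex \<Rightarrow> complex \<Rightarrow> complex \<Rightarrow> complex" where
  "log_deriv4 p q w1 w2 w3 = (p*w2 + q) - 4*w1*w3 - 3*w2^2 + 12*w1^2*w2 - 6*w1^4"

definition log_deriv5 :: "complex \<Rightarrow> complex \<Rightarrow> complex \<Rightarrow> complex \<Rightarrow> complex \<Rightarrow> complex" where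
  "log_deriv5 p q w1 w2 w3 =
     (p*w3 + q*w1) - 5*w1*(p*w2 + q) - 10*w2*w3 + 20*w1^2*w3 + 30*w1*w2^2 - 60*w1^3*w2 + 24*w1^5"

locale quartic_ode_solution =
  fixes H0 H1 H2 H3 :: "real \<Rightarrow> complex" and p q :: real
  assumes H0_deriv: "(H0 has_vector_derivative H1 x) (at x)"
    and H1_deriv: "(H1 has_vector_derivative H2 x) (at x)"
    and H2_deriv: "(H2 has_vector_derivative H3 x) (at x)"
    and H3_deriv: "(H3 has_vector_derivative of_real p * H2 x + of_real q * H0 x) (at x)"
    and H0_nonzero: "H0 x \<noteq> 0"
begin

definition "w1 x = H1 x / H0 x"
definition "w2 x = H2 x / H0 x"
definition "w3 x = H3 x / H0 x"

lemma w1_deriv: "(w1 has_vector_derivative w2 x - w1 x * w1 x) (at x)"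
  unfolding w1_def[abs_def] w2_def
  by (rule has_vector_derivative_eq_rhs[OF has_vector_derivative_quotient[OF H1_deriv H0_deriv H0_nonzero]])
     (simp add: diff_divide_distrib)

lemma w2_deriv: "(w2 has_vector_derivative w3 x - w2 x * w1 x) (at x)"
  unfolding w2_def[abs_def] w3_def w1_def
  by (rule has_vector_derivative_eq_rhs[OF has_vector_derivative_quotient[OF H2_deriv H0_deriv H0_nonzero]])
     (simp add: diff_divide_distrib)

lemma w3_deriv: "(w3 has_vector_derivative of_real p * w2 x + of_real q - w3 x * w1 x) (at x)"
  unfolding w3_def[abs_def] w2_def w1_def
  by (rule has_vector_derivative_eq_rhs[OF has_vector_derivative_quotient[OF H3_deriv H0_deriv H0_nonzero]])
     (use H0_nonzero in \<open>simp add: field_simps\<close>)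

lemmas w_derivs = w1_deriv w2_deriv w3_deriv

lemma log_deriv1_deriv: "(w1 has_vector_derivative log_deriv2 (w1 x) (w2 x)) (at x)"
  unfolding log_deriv2_def by (rule has_vector_derivative_eq_rhs[OF w1_deriv]) (simp add: power2_eq_square)

lemma log_deriv2_deriv:
  "((\<lambda>x. log_deriv2 (w1 x) (w2 x)) has_vector_derivative log_deriv3 (w1 x) (w2 x) (w3 x)) (at x)"
  unfolding log_deriv2_def log_deriv3_def
  by (rule derivative_eq_intros w_derivs refl)+ (simp; algebra)

lemma log_deriv3_deriv:
  "((\<lambda>x. log_deriv3 (w1 x) (w2 x) (w3 x)) has_vector_derivative log_deriv4 p q (w1 x) (w2 x) (w3 x)) (at x)"
  unfolding log_deriv3_def log_deriv4_def
  by (rule derivative_eq_intros w_derivs refl)+ (simp; algebra)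

lemma log_deriv4_deriv:
  "((\<lambda>x. log_deriv4 p q (w1 x) (w2 x) (w3 x)) has_vector_derivative log_deriv5 p q (w1 x) (w2 x) (w3 x)) (at x)"
  unfolding log_deriv4_def log_deriv5_def
  by (rule derivative_eq_intros w_derivs refl)+ (simp; algebra)

lemma deriv_Im_log_derivs:
  "deriv (\<lambda>x. c * Im (w1 x)) = (\<lambda>x. c * Im (log_deriv2 (w1 x) (w2 x)))"
  "deriv (\<lambda>x. c * Im (log_deriv2 (w1 x) (w2 x))) = (\<lambda>x. c * Im (log_deriv3 (w1 x) (w2 x) (w3 x)))"
  "deriv (\<lambda>x. c * Im (log_deriv3 (w1 x) (w2 x) (w3 x))) = (\<lambda>x. c * Im (log_deriv4 p q (w1 x) (w2 x) (w3 x)))"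
  "deriv (\<lambda>x. c * Im (log_deriv4 p q (w1 x) (w2 x) (w3 x))) = (\<lambda>x. c * Im (log_deriv5 p q (w1 x) (w2 x) (w3 x)))"
  by (auto simp: fun_eq_iff intro!: DERIV_imp_deriv DERIV_cmult has_field_derivative_Im
      log_deriv1_deriv log_deriv2_deriv log_deriv3_deriv log_deriv4_deriv)

end

definition gardner_stationary :: "real \<Rightarrow> real \<Rightarrow> real \<Rightarrow> real \<Rightarrow> real \<Rightarrow> real \<Rightarrow> real \<Rightarrow> real" where
  "gardner_stationary \<alpha> \<beta> \<mu> b b1 b2 b4 =
     b4 - 2 * (\<beta>^2 - \<alpha>^2) * (b2 + 3 * \<mu> * b^2 + b^3) + (\<alpha>^2 + \<beta>^2)^2 * b
     + 5 * b * b1^2 + 5 * b^2 * b2 + 3/2 * b^5 + 5 * \<mu> * b1^2 + 10 * \<mu> * b * b2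
     + 10 * \<mu>^2 * b^3 + 15/2 * \<mu> * b^4"

definition reduced_stationary :: "real \<Rightarrow> real \<Rightarrow> real \<Rightarrow> real \<Rightarrow> real \<Rightarrow> real \<Rightarrow> real \<Rightarrow> real" where
  "reduced_stationary \<alpha> \<beta> m \<phi> \<phi>1 \<phi>2 \<phi>4 =
     \<phi>4 - 2 * (\<beta>^2 - \<alpha>^2) * (\<phi>2 + 6 * m * \<phi>^2 + 8 * \<phi>^3) + (\<alpha>^2 + \<beta>^2)^2 * \<phi>
     + 40 * \<phi> * \<phi>1^2 + 40 * \<phi>^2 * \<phi>2 + 96 * \<phi>^5 + 10 * m * \<phi>1^2
     + 20 * m * \<phi> * \<phi>2 + 40 * m^2 * \<phi>^3 + 120 * m * \<phi>^4"

lemma gardner_stationary_scaled: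
  fixes r :: real
  assumes "r^2 = 2"
  shows "gardner_stationary \<alpha> \<beta> \<mu> (2*r*\<phi>) (2*r*\<phi>1) (2*r*\<phi>2) (2*r*\<phi>4)
       = 2 * r * reduced_stationary \<alpha> \<beta> (r*\<mu>) \<phi> \<phi>1 \<phi>2 \<phi>4"
proof -
  have r_powers: "r^3 = 2*r" "r^4 = 4" "r^5 = 4*r" using assms by (simp_all add: power_numeral_reduce)
  have r_r: "r*(r*y) = 2*y" for y using assms by (simp add: power2_eq_square mult.assoc[symmetric])
  show ?thesis unfolding gardner_stationary_def reduced_stationary_def
    by (simp add: algebra_simps power_mult_distrib assms r_powers r_r power2_eq_square)
qed

lemma reduced_stationary_log_derivs:
  fixes w1 w2 w3 :: complex and \<alpha> \<beta> m W :: real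
  assumes "\<alpha> \<noteq> 0" and "\<beta> \<noteq> 0"
    and Re_w2: "Re w2 = (cmod w1)^2 + m * Im w1"
    and Re_w3: "Re w3 = Re (w2 * cnj w1) + m * Im w2"
    and rel_plus: "Im ((w3 + \<beta> * w2 + \<alpha>^2 * w1 + \<alpha>^2 * \<beta>) * cnj (w3 - \<beta> * w2 + \<alpha>^2 * w1 - \<alpha>^2 * \<beta>))
                   = 2 * m * \<beta> * W"
    and rel_rotated: "(cmod (w3 + \<i> * \<alpha> * w2 - \<beta>^2 * w1 - \<i> * \<alpha> * \<beta>^2))^2
                      - (cmod (w3 - \<i> * \<alpha> * w2 - \<beta>^2 * w1 + \<i> * \<alpha> * \<beta>^2))^2 = - 4 * m * \<alpha> * W"
  shows "reduced_stationary \<alpha> \<beta> m (Im w1) (Im (log_deriv2 w1 w2)) (Im (log_deriv3 w1 w2 w3))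
           (Im (log_deriv5 (of_real (\<beta>^2 - \<alpha>^2)) (of_real (\<alpha>^2 * \<beta>^2)) w1 w2 w3)) = 0"
proof -
  obtain R f U2 V2 U3 V3 where w: "w1 = Complex R f" "w2 = Complex U2 V2" "w3 = Complex U3 V3"
    by (metis complex.collapse)
  have hU2: "U2 = R^2 + f^2 + m*f" using Re_w2 by (simp add: w cmod_power2)
  have hU3: "U3 = R*U2 + f*V2 + m*V2" using Re_w3 by (simp add: w)
  have "(V3 + \<beta>*V2 + \<alpha>^2*f) * (U3 - \<beta>*U2 + \<alpha>^2*R - \<beta>*\<alpha>^2)
        - (U3 + \<beta>*U2 + \<alpha>^2*R + \<beta>*\<alpha>^2) * (V3 - \<beta>*V2 + \<alpha>^2*f) = 2*m*\<beta>*W" (is "?P = _")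
    using rel_plus by (simp add: w algebra_simps)
  moreover have "(U3 - \<alpha>*V2 - \<beta>^2*R)^2 + (V3 + \<alpha>*U2 - \<beta>^2*f - \<alpha>*\<beta>^2)^2
        - (U3 + \<alpha>*V2 - \<beta>^2*R)^2 - (V3 - \<alpha>*U2 - \<beta>^2*f + \<alpha>*\<beta>^2)^2 = -4*m*\<alpha>*W" (is "?Q = _")
    using rel_rotated by (simp add: w cmod_power2 algebra_simps)
  ultimately have
    "(\<alpha>*\<beta>^2/2 - \<alpha>^3/2 - 5*f*m*\<alpha> - 5*f^2*\<alpha> - 5*R^2*\<alpha>) * (?P - 2*m*\<beta>*W)
     + (\<beta>^3/4 - \<alpha>^2*\<beta>/4 - 5/2*f*m*\<beta> - 5/2*f^2*\<beta> - 5/2*R^2*\<beta>) * (?Q + 4*m*\<alpha>*W) = 0"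
    by simp
  moreover have "Im w1 = f" by (simp add: w)
  moreover have "Im (log_deriv2 w1 w2) = V2 - 2*R*f"
    unfolding w log_deriv2_def by (simp add: power2_eq_square)
  moreover have "Im (log_deriv3 w1 w2 w3) = V3 - 3*f*U2 - 2*f^3 - 3*R*V2 + 6*R^2*f"
    unfolding w log_deriv3_def by (simp add: power_numeral_reduce algebra_simps)
  moreover have "Im (log_deriv5 (of_real (\<beta>^2 - \<alpha>^2)) (of_real (\<alpha>^2 * \<beta>^2)) w1 w2 w3)
      = V3*(\<beta>^2 - \<alpha>^2) - 10*V2*U3 - 10*U2*V3 - 4*f*(\<alpha>^2 * \<beta>^2) - 30*f*V2^2 - 5*f*U2*(\<beta>^2 - \<alpha>^2)
        + 30*f*U2^2 - 20*f^2*V3 + 60*f^3*U2 + 24*f^5 - 5*R*V2*(\<beta>^2 - \<alpha>^2) + 60*R*U2*V2 + 40*R*f*U3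
        + 180*R*f^2*V2 + 20*R^2*V3 - 180*R^2*f*U2 - 240*R^2*f^3 - 60*R^3*V2 + 120*R^4*f"
    unfolding w log_deriv5_def by (simp add: power_numeral_reduce algebra_simps)
  \<comment> \<open>once U2 and U3 are eliminated, the combination of the two relations above is the target
      multiplied by \<open>\<alpha> \<beta> (\<alpha>\<^sup>2 + \<beta>\<^sup>2)\<close>\<close>
  ultimately have "\<alpha> * \<beta> * (\<alpha>^2 + \<beta>^2) * reduced_stationary \<alpha> \<beta> m (Im w1) (Im (log_deriv2 w1 w2))
      (Im (log_deriv3 w1 w2 w3)) (Im (log_deriv5 (of_real (\<beta>^2 - \<alpha>^2)) (of_real (\<alpha>^2 * \<beta>^2)) w1 w2 w3)) = 0"
    unfolding reduced_stationary_def hU3 hU2 by algebra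
  moreover have "\<alpha> * \<beta> * (\<alpha>^2 + \<beta>^2) \<noteq> 0" using assms(1,2) by (simp add: add_pos_pos)
  ultimately show ?thesis by simp
qed

locale gardner_breather_params =
  fixes \<alpha> \<beta> \<mu> x1 x2 t :: real
  assumes \<alpha>_nonzero: "\<alpha> \<noteq> 0" and \<beta>_nonzero: "\<beta> \<noteq> 0"
    and Delta_pos: "gardner_Delta \<alpha> \<beta> \<mu> > 0"
begin

definition "\<theta> x = \<alpha> * (x + (\<alpha>^2 - 3*\<beta>^2) * t + x1)"
definition "\<zeta> x = \<beta> * (x + (3*\<alpha>^2 - \<beta>^2) * t + x2)"

definition "a = sqrt (\<alpha>^2 + \<beta>^2)"
definition "d = sqrt (gardner_Delta \<alpha> \<beta> \<mu>)"
definition "m = sqrt 2 * \<mu>"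
definition "k1 = m * \<beta> / (\<alpha> * a * d)"
definition "k2 = \<beta> * a / (\<alpha> * d)"
definition "k3 = m * \<beta> / d^2"

(* H0 = F + i G for the breather's F and G; H1, H2, H3 are its successive x-derivatives. *)
definition "H0 x = Complex (cosh (\<zeta> x) - k1 * (\<alpha> * cos (\<theta> x) - \<beta> * sin (\<theta> x)))
                          (k2 * sin (\<theta> x) - k3 * exp (\<zeta> x))"
definition "H1 x = Complex (\<beta> * sinh (\<zeta> x) + k1 * (\<alpha>^2 * sin (\<theta> x) + \<alpha> * \<beta> * cos (\<theta> x)))
                          (k2 * \<alpha> * cos (\<theta> x) - k3 * \<beta> * exp (\<zeta> x))"
definition "H2 x = Complex (\<beta>^2 * cosh (\<zeta> x) + k1 * (\<alpha>^3 * cos (\<theta> x) - \<alpha>^2 * \<beta> * sin (\<theta> x)))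
                          (- k2 * \<alpha>^2 * sin (\<theta> x) - k3 * \<beta>^2 * exp (\<zeta> x))"
definition "H3 x = Complex (\<beta>^3 * sinh (\<zeta> x) - k1 * (\<alpha>^4 * sin (\<theta> x) + \<alpha>^3 * \<beta> * cos (\<theta> x)))
                          (- k2 * \<alpha>^3 * cos (\<theta> x) - k3 * \<beta>^3 * exp (\<zeta> x))"

lemma \<theta>_deriv: "(\<theta> has_real_derivative \<alpha>) (at x)"
  unfolding \<theta>_def by (auto intro!: derivative_eq_intros)

lemma \<zeta>_deriv: "(\<zeta> has_real_derivative \<beta>) (at x)"
  unfolding \<zeta>_def by (auto intro!: derivative_eq_intros)

lemma H0_deriv: "(H0 has_vector_derivative H1 x) (at x)"
  unfolding has_vector_derivative_complex_iff H0_def H1_def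
  by (auto intro!: derivative_eq_intros \<theta>_deriv \<zeta>_deriv simp: algebra_simps power2_eq_square)

lemma H1_deriv: "(H1 has_vector_derivative H2 x) (at x)"
  unfolding has_vector_derivative_complex_iff H1_def H2_def
  by (auto intro!: derivative_eq_intros \<theta>_deriv \<zeta>_deriv simp: algebra_simps power2_eq_square power3_eq_cube)

lemma H2_deriv: "(H2 has_vector_derivative H3 x) (at x)"
  unfolding has_vector_derivative_complex_iff H2_def H3_def
  by (auto intro!: derivative_eq_intros \<theta>_deriv \<zeta>_deriv simp: algebra_simps power_numeral_reduce)

lemma H3_deriv:
  "(H3 has_vector_derivative of_real (\<beta>^2 - \<alpha>^2) * H2 x + of_real (\<alpha>^2 * \<beta>^2) * H0 x) (at x)"
  unfolding has_vector_derivative_complex_iff H3_def H2_def H0_def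
  by (auto intro!: derivative_eq_intros \<theta>_deriv \<zeta>_deriv simp: algebra_simps power_numeral_reduce)

lemma d_pos: "d > 0" and d_square: "d^2 = gardner_Delta \<alpha> \<beta> \<mu>"
  using Delta_pos by (simp_all add: d_def)

lemma a_pos: "a > 0" and a_square: "a^2 = \<alpha>^2 + \<beta>^2"
  using \<alpha>_nonzero by (simp_all add: a_def add_pos_nonneg add_nonneg_nonneg)

lemma m_square: "m^2 = 2 * \<mu>^2"
  by (simp add: m_def power_mult_distrib)

lemma d_square_eq: "d^2 = a^2 - m^2"
  unfolding d_square a_square m_square gardner_Delta_def by simp

lemma k_relations:
  "k2 * k3 = k1 * (\<beta> + k3 * m)" "k2 * m = k1 * (\<alpha>^2 + \<beta>^2)" "k2^2 * \<alpha>^2 = \<beta>^2 + k3 * \<beta> * m"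
    "k1 * k2 = m * \<beta>^2 / (\<alpha>^2 * d^2)"
  using \<alpha>_nonzero a_pos d_pos a_square d_square_eq
  by (auto simp: k1_def k2_def k3_def field_simps power2_eq_square) algebra+

lemma H0_nonzero: "H0 x \<noteq> 0"
proof -
  define s c E where "s = sin (\<theta> x)" and "c = cos (\<theta> x)" and "E = exp (\<zeta> x)"
  define P where "P = \<alpha> * c - \<beta> * s"
  define b where "b = 2 * k3^2 + k2^2 * s^2 - k1^2 * P^2 - 4 * k1 * k2 * k3 * P * s"
  have sc: "s^2 + c^2 = 1" by (simp add: s_def c_def)
  have cosh_E: "2 * cosh (\<zeta> x) = E + inverse E"
    by (simp add: E_def cosh_def exp_minus)
  have E_inverse: "E * inverse E = 1" by (simp add: E_def)
  have "k3^2 * d^2 - m^2 * k2^2 * s^2 - a^2 * k1^2 * P^2 - 2 * k1 * k2 * k3 * P * s * d^2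
      = m^2 * \<beta>^2 / (\<alpha>^2 * d^2) * (\<alpha>^2 - a^2 * s^2 - P^2 - 2 * \<beta> * P * s)"
    using \<alpha>_nonzero a_pos d_pos
    by (simp add: k1_def k2_def k3_def field_simps power2_eq_square)
  also have "\<alpha>^2 - a^2 * s^2 - P^2 - 2 * \<beta> * P * s = 0"
    using sc a_square unfolding P_def by algebra
  finally have "d^2 * b = (k1^2 * P^2 + k2^2 * s^2) * (a^2 + m^2)"
    using d_square_eq unfolding b_def by algebra
  then have "b \<ge> 0"
    using d_pos by (metis zero_le_mult_iff zero_le_power2 add_nonneg_nonneg zero_less_power not_le)
  have "(cmod (H0 x))^2 = (cosh (\<zeta> x) - k1 * P)^2 + (k2 * s - k3 * E)^2"
    by (simp add: H0_def cmod_power2 P_def s_def c_def E_def)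
  \<comment> \<open>with \<open>2 cosh \<zeta> = E + 1/E\<close>, \<open>|H0|\<^sup>2\<close> becomes a sum of squares plus a positive constant\<close>
  then have "4 * (1 + 4 * k3^2) * (cmod (H0 x))^2
      = (1 + 4 * k3^2) * (inverse E - 2 * k1 * P)^2
        + ((1 + 4 * k3^2) * E - 2 * (k1 * P + 2 * k2 * k3 * s))^2 + 2 + 4 * b"
    using cosh_E E_inverse unfolding b_def by algebra
  also have "\<dots> > 0"
    using \<open>b \<ge> 0\<close> by (simp add: add_pos_nonneg add_nonneg_pos)
  finally show ?thesis by auto
qed

sublocale quartic_ode_solution H0 H1 H2 H3 "\<beta>^2 - \<alpha>^2" "\<alpha>^2 * \<beta>^2"
  by unfold_locales (fact H0_deriv H1_deriv H2_deriv H3_deriv H0_nonzero)+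

lemma H2_relation:
  "Re (H2 x * cnj (H0 x)) - (cmod (H1 x))^2 = m * Im (H1 x * cnj (H0 x))"
  unfolding H0_def H1_def H2_def cmod_power2
  by (simp, use sin_cos_squared_add[of "\<theta> x"] cosh_square_eq[of "\<zeta> x"] cosh_plus_sinh[of "\<zeta> x"]
        k_relations(1-3) in algebra)

lemma H3_relation:
  "Re (H3 x * cnj (H0 x)) - Re (H2 x * cnj (H1 x)) = m * Im (H2 x * cnj (H0 x))"
  unfolding H0_def H1_def H2_def H3_def
  by (simp, use sin_cos_squared_add[of "\<theta> x"] cosh_square_eq[of "\<zeta> x"] cosh_plus_sinh[of "\<zeta> x"]
        k_relations(1-3) in algebra)

lemma H_annihilated_plus:
  "H3 x + \<beta> * H2 x + \<alpha>^2 * H1 x + \<alpha>^2 * \<beta> * H0 x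
     = of_real (\<beta> * (\<alpha>^2 + \<beta>^2) * exp (\<zeta> x)) * Complex 1 (- 2 * k3)"
  unfolding H0_def H1_def H2_def H3_def complex_eq_iff
  by (simp add: cosh_plus_sinh[symmetric], safe; algebra)

lemma H_annihilated_minus:
  "H3 x - \<beta> * H2 x + \<alpha>^2 * H1 x - \<alpha>^2 * \<beta> * H0 x = - of_real (\<beta> * (\<alpha>^2 + \<beta>^2) * exp (- \<zeta> x))"
  unfolding H0_def H1_def H2_def H3_def complex_eq_iff
  by (simp add: cosh_minus_sinh[symmetric], safe; algebra)

lemma H_rotated_difference:
  "(cmod (H3 x + \<i> * \<alpha> * H2 x - \<beta>^2 * H1 x - \<i> * \<alpha> * \<beta>^2 * H0 x))^2
   - (cmod (H3 x - \<i> * \<alpha> * H2 x - \<beta>^2 * H1 x + \<i> * \<alpha> * \<beta>^2 * H0 x))^2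
   = - 4 * \<alpha>^3 * (\<alpha>^2 + \<beta>^2)^2 * k1 * k2"
  unfolding H0_def H1_def H2_def H3_def cmod_power2
  by (simp, use sin_cos_squared_add[of "\<theta> x"] in algebra)

definition "W x = \<beta>^2 * (\<alpha>^2 + \<beta>^2)^2 / (d^2 * (cmod (H0 x))^2)"

lemma Re_w2_eq: "Re (w2 x) = (cmod (w1 x))^2 + m * Im (w1 x)"
proof -
  have "Re (w2 x) - (cmod (w1 x))^2 - m * Im (w1 x)
      = (Re (H2 x * cnj (H0 x)) - (cmod (H1 x))^2 - m * Im (H1 x * cnj (H0 x))) / (cmod (H0 x))^2"
    unfolding w1_def w2_def Re_divide_cnj Im_divide_cnj norm_divide power_divide
    by (simp only: diff_divide_distrib times_divide_eq_right)
  then show ?thesis using H2_relation[of x] by simp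
qed

lemma Re_w3_eq: "Re (w3 x) = Re (w2 x * cnj (w1 x)) + m * Im (w2 x)"
proof -
  have "Re (w3 x) - Re (w2 x * cnj (w1 x)) - m * Im (w2 x)
      = (Re (H3 x * cnj (H0 x)) - Re (H2 x * cnj (H1 x)) - m * Im (H2 x * cnj (H0 x))) / (cmod (H0 x))^2"
    unfolding w1_def w2_def w3_def divide_mult_cnj_divide Re_divide_of_real
    unfolding Re_divide_cnj Im_divide_cnj
    by (simp only: diff_divide_distrib times_divide_eq_right)
  then show ?thesis using H3_relation[of x] by simp
qed

lemma w_annihilated_product:
  "Im ((w3 x + \<beta> * w2 x + \<alpha>^2 * w1 x + \<alpha>^2 * \<beta>) * cnj (w3 x - \<beta> * w2 x + \<alpha>^2 * w1 x - \<alpha>^2 * \<beta>))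
     = 2 * m * \<beta> * W x"
proof -
  have plus: "w3 x + \<beta> * w2 x + \<alpha>^2 * w1 x + \<alpha>^2 * \<beta>
      = (H3 x + \<beta> * H2 x + \<alpha>^2 * H1 x + \<alpha>^2 * \<beta> * H0 x) / H0 x"
    and minus: "w3 x - \<beta> * w2 x + \<alpha>^2 * w1 x - \<alpha>^2 * \<beta>
      = (H3 x - \<beta> * H2 x + \<alpha>^2 * H1 x - \<alpha>^2 * \<beta> * H0 x) / H0 x"
    using H0_nonzero by (simp_all add: w1_def w2_def w3_def field_simps)
  have "Im ((H3 x + \<beta> * H2 x + \<alpha>^2 * H1 x + \<alpha>^2 * \<beta> * H0 x)
           * cnj (H3 x - \<beta> * H2 x + \<alpha>^2 * H1 x - \<alpha>^2 * \<beta> * H0 x)) = 2 * k3 * \<beta>^2 * (\<alpha>^2 + \<beta>^2)^2"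
    unfolding H_annihilated_plus H_annihilated_minus by (simp add: exp_minus power2_eq_square)
  then show ?thesis
    unfolding plus minus divide_mult_cnj_divide Im_divide_of_real
    using d_pos by (simp only:) (simp add: W_def k3_def field_simps)
qed

lemma w_rotated_difference:
  "(cmod (w3 x + \<i> * \<alpha> * w2 x - \<beta>^2 * w1 x - \<i> * \<alpha> * \<beta>^2))^2
   - (cmod (w3 x - \<i> * \<alpha> * w2 x - \<beta>^2 * w1 x + \<i> * \<alpha> * \<beta>^2))^2 = - 4 * m * \<alpha> * W x"
proof -
  have plus: "w3 x + \<i> * \<alpha> * w2 x - \<beta>^2 * w1 x - \<i> * \<alpha> * \<beta>^2
      = (H3 x + \<i> * \<alpha> * H2 x - \<beta>^2 * H1 x - \<i> * \<alpha> * \<beta>^2 * H0 x) / H0 x"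
    and minus: "w3 x - \<i> * \<alpha> * w2 x - \<beta>^2 * w1 x + \<i> * \<alpha> * \<beta>^2
      = (H3 x - \<i> * \<alpha> * H2 x - \<beta>^2 * H1 x + \<i> * \<alpha> * \<beta>^2 * H0 x) / H0 x"
    using H0_nonzero by (simp_all add: w1_def w2_def w3_def field_simps)
  have "- 4 * \<alpha>^3 * (\<alpha>^2 + \<beta>^2)^2 * k1 * k2 = - 4 * m * \<alpha> * \<beta>^2 * (\<alpha>^2 + \<beta>^2)^2 / d^2"
    using \<alpha>_nonzero d_pos by (simp add: k_relations(4) field_simps power2_eq_square power3_eq_cube)
  then show ?thesis
    unfolding plus minus norm_divide power_divide diff_divide_distrib[symmetric] H_rotated_difference
    by (simp only:) (simp add: W_def field_simps)
qed

lemma gardner_breather_eq: "gardner_breather \<alpha> \<beta> \<mu> x1 x2 t = (\<lambda>x. 2 * sqrt 2 * Im (w1 x))"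
proof -
  have F: "gardner_F \<alpha> \<beta> \<mu> x1 x2 t = (\<lambda>x. Re (H0 x))"
    and G: "gardner_G \<alpha> \<beta> \<mu> x1 x2 t = (\<lambda>x. Im (H0 x))"
    using d_square
    by (auto simp: fun_eq_iff gardner_F_def gardner_G_def Let_def H0_def k1_def k2_def k3_def m_def
        \<theta>_def \<zeta>_def a_def d_def)
  have "deriv (\<lambda>x. Re (H0 x)) = (\<lambda>x. Re (H1 x))" "deriv (\<lambda>x. Im (H0 x)) = (\<lambda>x. Im (H1 x))"
    by (auto simp: fun_eq_iff intro!: DERIV_imp_deriv has_field_derivative_Re has_field_derivative_Im H0_deriv)
  then show ?thesis
    unfolding gardner_breather_def Let_def F G w1_def Im_divide
    by (simp add: fun_eq_iff algebra_simps)
qed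

lemma gardner_breather_stationary:
  defines "B \<equiv> gardner_breather \<alpha> \<beta> \<mu> x1 x2 t"
  shows "gardner_stationary \<alpha> \<beta> \<mu> (B x) (deriv B x) ((deriv ^^ 2) B x) ((deriv ^^ 4) B x) = 0"
proof -
  have funpow_deriv: "(deriv ^^ 2) f = deriv (deriv f)" "(deriv ^^ 4) f = deriv (deriv (deriv (deriv f)))"
    for f :: "real \<Rightarrow> real"
    by (simp_all add: numeral_eq_Suc)
  have "gardner_stationary \<alpha> \<beta> \<mu> (B x) (deriv B x) ((deriv ^^ 2) B x) ((deriv ^^ 4) B x)
      = 2 * sqrt 2 * reduced_stationary \<alpha> \<beta> m (Im (w1 x)) (Im (log_deriv2 (w1 x) (w2 x)))
          (Im (log_deriv3 (w1 x) (w2 x) (w3 x)))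
          (Im (log_deriv5 (of_real (\<beta>^2 - \<alpha>^2)) (of_real (\<alpha>^2 * \<beta>^2)) (w1 x) (w2 x) (w3 x)))"
    unfolding funpow_deriv B_def gardner_breather_eq deriv_Im_log_derivs m_def
    by (rule gardner_stationary_scaled) simp
  also have "\<dots> = 0"
    using reduced_stationary_log_derivs[OF \<alpha>_nonzero \<beta>_nonzero Re_w2_eq Re_w3_eq w_annihilated_product
        w_rotated_difference] by simp
  finally show ?thesis .
qed

end

theorem theorem3p6:
  fixes \<alpha> \<beta> \<mu> x1 x2 t x :: real
  assumes "\<alpha> \<noteq> 0" and "\<beta> \<noteq> 0" and "\<mu> \<noteq> 0"
    and "gardner_Delta \<alpha> \<beta> \<mu> > 0"
  defines "B \<equiv> gardner_breather \<alpha> \<beta> \<mu> x1 x2 t"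
  shows "(deriv ^^ 4) B x
           - 2 * (\<beta>^2 - \<alpha>^2) * ((deriv ^^ 2) B x + 3 * \<mu> * (B x)^2 + (B x)^3)
           + (\<alpha>^2 + \<beta>^2)^2 * B x
           + 5 * B x * (deriv B x)^2 + 5 * (B x)^2 * (deriv ^^ 2) B x
           + 3/2 * (B x)^5 + 5 * \<mu> * (deriv B x)^2 + 10 * \<mu> * B x * (deriv ^^ 2) B x
           + 10 * \<mu>^2 * (B x)^3 + 15/2 * \<mu> * (B x)^4 = 0"
proof -
  interpret gardner_breather_params \<alpha> \<beta> \<mu> x1 x2 t
    using assms by unfold_locales
  show ?thesis
    using gardner_breather_stationary[of x] unfolding B_def gardner_stationary_def .
qed

end
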